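(* Let $\gamma>1$ and $F(x)=x^\gamma$. Let $u:[0,\infty)\to\mathbb R$ be the unique solution of $$u(T)=\mathbb E\Big[1_{\{\sigma_1>T\}}+\min_{a\in[0,1]}\big(a^\gamma+(1-a)^\gamma u(T-\sigma_1)\big)1_{\{\sigma_1\le T\}}\Big],$$ where $\sigma_1$ is exponentially distributed with rate $\lambda>0$ (the first arrival time of a Poisson process of intensity $\lambda$). Then $u$ satisfies $$\partial_T u(T)=\lambda u(T)\Big(\frac{1}{[1+u(T)^{1/(\gamma-1)}]^{\gamma-1}}-1\Big),\qquad u(0)=1,$$ and the optimal action $a(T)=\arg\min_{a\in[0,1]}\{a^\gamma+(1-a)^\gamma u(T)\}$ satisfies $$\partial_T a(T)=\frac{\lambda}{\gamma-1}a(T)(1-a(T))\big((1-a(T))^{\gamma-1}-1\big)<0,\qquad a(0)=1/2,$$ and $T\mapsto a(T)$ is convex.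
   Context: This is the continuous-sale-amount version of an execution problem: orders arrive according to a Poisson process $N$ of intensity $\lambda$ with arrival times $\sigma_1<\sigma_2<\cdots$; a holding of $x\ge0$ units may be sold in arbitrary real amounts at arrival times, with trade cost $F(\text{size})$ and the remainder $\xi_T$ sold at $T$ at cost $F(\xi_T)$; $u(T)$ is the minimal expected cost per unit of $x^\gamma$, i.e. $\hat u(x,T)=x^\gamma u(T)$. *)

theory Defs
  imports "HOL-Probability.Probability"
begin

text \<open>Cost of a trade of relative size a when the remaining fraction has unit cost v.\<close>
definition trade_cost :: "real \<Rightarrow> real \<Rightarrow> real \<Rightarrow> real" where
  "trade_cost \<gamma> v a = a powr \<gamma> + (1 - a) powr \<gamma> * v"

definition min_cost :: "real \<Rightarrow> real \<Rightarrow> real" where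
  "min_cost \<gamma> v = (INF a\<in>{0..1}. trade_cost \<gamma> v a)"

definition solves_value_eq :: "real \<Rightarrow> real \<Rightarrow> (real \<Rightarrow> real) \<Rightarrow> bool" where
  "solves_value_eq lam \<gamma> u \<longleftrightarrow>
     (\<forall>T\<ge>0. u T = (\<integral>s. (if s > T then 1 else min_cost \<gamma> (u (T - s)))
                      \<partial>(density lborel (exponential_density lam))))"

end

theory Submission
  imports Defs
begin

text \<open>
  For \<open>v > 0\<close> the minimisation over the traded fraction is explicit: the first-order condition
  \<open>a^(\<gamma>-1) = v (1-a)^(\<gamma>-1)\<close> has the unique root \<open>a = w/(1+w)\<close> with \<open>w = v^(1/(\<gamma>-1))\<close>,
  and the minimum is \<open>v (1-a)^(\<gamma>-1)\<close>.
  Substituting \<open>r = T - s\<close> in the expectation turns the fixed-point equation into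
  \<open>u T = 1 - exp (-\<lambda>T) \<integral>[0,T] \<lambda> exp (\<lambda>r) (1 - min_cost (u r)) dr\<close>, so \<open>u\<close> is continuous,
  hence differentiable with \<open>u' = \<lambda> (min_cost u - u)\<close>, \<open>u 0 = 1\<close> and \<open>u \<le> 1\<close>; moreover
  \<open>u T exp (\<lambda>T)\<close> is nondecreasing as long as \<open>u > 0\<close>, which forces \<open>u > 0\<close> throughout.
  The optimal fraction is therefore \<open>a = w/(1+w)\<close> with \<open>w = u^(1/(\<gamma>-1))\<close>, and the chain rule
  gives \<open>a' = \<lambda>/(\<gamma>-1) f(a)\<close> with \<open>f x = x (1-x) ((1-x)^(\<gamma>-1) - 1)\<close>.
  As \<open>f\<close> is negative and decreasing on \<open>(0, 1/2]\<close>, where \<open>a\<close> takes its values, \<open>a\<close> decreases,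
  so \<open>a'\<close> increases and \<open>a\<close> is convex.
\<close>

lemma trade_cost_ge_min:
  assumes "a \<in> {0..1}" "\<gamma> \<ge> 0"
  shows "min v 0 \<le> trade_cost \<gamma> v a"
proof -
  have q: "0 \<le> (1 - a) powr \<gamma>" "(1 - a) powr \<gamma> \<le> 1"
    using assms by (auto intro: powr_le1)
  have "min v 0 \<le> (1 - a) powr \<gamma> * v"
  proof (cases "v \<ge> 0")
    case False
    then have "1 * v \<le> (1 - a) powr \<gamma> * v" using q by (intro mult_right_mono_neg) auto
    then show ?thesis by simp
  qed (use q in simp)
  then show ?thesis unfolding trade_cost_def using powr_ge_zero[of a \<gamma>] by linarith
qed

lemma bdd_below_trade_cost: "\<gamma> \<ge> 0 \<Longrightarrow> bdd_below (trade_cost \<gamma> v ` {0..1})"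
  using trade_cost_ge_min by (intro bdd_belowI2) auto

lemma min_cost_le_trade_cost: "\<gamma> \<ge> 0 \<Longrightarrow> a \<in> {0..1} \<Longrightarrow> min_cost \<gamma> v \<le> trade_cost \<gamma> v a"
  unfolding min_cost_def by (rule cINF_lower[OF bdd_below_trade_cost])

lemma min_cost_greatest: "(\<And>a. a \<in> {0..1} \<Longrightarrow> c \<le> trade_cost \<gamma> v a) \<Longrightarrow> c \<le> min_cost \<gamma> v"
  unfolding min_cost_def by (intro cINF_greatest) auto

lemma min_cost_le_one: "\<gamma> \<ge> 0 \<Longrightarrow> min_cost \<gamma> v \<le> 1"
  using min_cost_le_trade_cost[of \<gamma> 1 v] by (simp add: trade_cost_def)

lemma min_cost_ge_min: "\<gamma> \<ge> 0 \<Longrightarrow> min v 0 \<le> min_cost \<gamma> v"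
  using trade_cost_ge_min by (intro min_cost_greatest) auto

lemma min_cost_lipschitz:
  assumes "\<gamma> \<ge> 0"
  shows "\<bar>min_cost \<gamma> v - min_cost \<gamma> v'\<bar> \<le> \<bar>v - v'\<bar>"
proof -
  have *: "min_cost \<gamma> x - \<bar>x - y\<bar> \<le> min_cost \<gamma> y" for x y
  proof (rule min_cost_greatest)
    fix a :: real assume a: "a \<in> {0..1}"
    have q: "0 \<le> (1 - a) powr \<gamma>" "(1 - a) powr \<gamma> \<le> 1"
      using a assms by (auto intro: powr_le1)
    have "(1 - a) powr \<gamma> * x - (1 - a) powr \<gamma> * y \<le> (1 - a) powr \<gamma> * \<bar>x - y\<bar>"
      using q by (simp add: right_diff_distrib[symmetric] mult_left_mono)
    also have "\<dots> \<le> \<bar>x - y\<bar>"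
      using q by (simp add: mult_left_le_one_le)
    finally have "trade_cost \<gamma> x a \<le> trade_cost \<gamma> y a + \<bar>x - y\<bar>"
      unfolding trade_cost_def by linarith
    then show "min_cost \<gamma> x - \<bar>x - y\<bar> \<le> trade_cost \<gamma> y a"
      using min_cost_le_trade_cost[OF assms a, of x] by linarith
  qed
  show ?thesis using *[of v v'] *[of v' v] by (simp add: abs_minus_commute)
qed

lemma continuous_on_min_cost: "\<gamma> \<ge> 0 \<Longrightarrow> continuous_on S (min_cost \<gamma>)"
  unfolding continuous_on_iff dist_real_def
  by (metis min_cost_lipschitz le_less_trans)

definition optimal_fraction :: "real \<Rightarrow> real \<Rightarrow> real" where
  "optimal_fraction \<gamma> v = v powr (1 / (\<gamma> - 1)) / (1 + v powr (1 / (\<gamma> - 1)))"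

lemma optimal_fraction_pos: "v > 0 \<Longrightarrow> 0 < optimal_fraction \<gamma> v"
  by (simp add: optimal_fraction_def add_pos_pos)

lemma one_minus_optimal_fraction:
  "1 - optimal_fraction \<gamma> v = 1 / (1 + v powr (1 / (\<gamma> - 1)))"
proof -
  have "1 + v powr (1 / (\<gamma> - 1)) > 0" by (simp add: add_pos_nonneg)
  then show ?thesis by (simp add: optimal_fraction_def field_simps)
qed

lemma optimal_fraction_less_one: "optimal_fraction \<gamma> v < 1"
proof -
  have "1 / (1 + v powr (1 / (\<gamma> - 1))) > 0" by (simp add: add_pos_nonneg)
  then show ?thesis using one_minus_optimal_fraction[of \<gamma> v] by linarith
qed

lemma optimal_fraction_le_half:
  assumes "\<gamma> > 1" "0 < v" "v \<le> 1"
  shows "optimal_fraction \<gamma> v \<le> 1 / 2"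
proof -
  have "v powr (1 / (\<gamma> - 1)) \<le> 1" using assms by (intro powr_le1) auto
  moreover have "1 + v powr (1 / (\<gamma> - 1)) > 0" by (simp add: add_pos_nonneg)
  ultimately show ?thesis by (simp add: optimal_fraction_def field_simps)
qed

lemma optimal_fraction_one [simp]: "optimal_fraction \<gamma> 1 = 1 / 2"
  by (simp add: optimal_fraction_def)

lemma has_real_derivative_trade_cost:
  assumes "\<gamma> > 1" "0 < b" "b < 1"
  shows "(trade_cost \<gamma> v has_real_derivative
           \<gamma> * (b powr (\<gamma> - 1) - v * (1 - b) powr (\<gamma> - 1))) (at b)"
  unfolding trade_cost_def[abs_def] using assms
  by (auto intro!: derivative_eq_intros simp: algebra_simps)

lemma trade_cost_slope_strict_mono:
  fixes \<gamma> v b c :: real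
  assumes "\<gamma> > 1" "v > 0" "0 \<le> b" "b < c" "c \<le> 1"
  shows "b powr (\<gamma> - 1) - v * (1 - b) powr (\<gamma> - 1) < c powr (\<gamma> - 1) - v * (1 - c) powr (\<gamma> - 1)"
proof -
  have "b powr (\<gamma> - 1) < c powr (\<gamma> - 1)"
    by (rule powr_less_mono2) (use assms in auto)
  moreover have "(1 - c) powr (\<gamma> - 1) < (1 - b) powr (\<gamma> - 1)"
    by (rule powr_less_mono2) (use assms in auto)
  ultimately show ?thesis using assms(2) by (smt (verit) mult_strict_left_mono)
qed

lemma trade_cost_slope_optimal_fraction:
  assumes "\<gamma> > 1" "v > 0"
  defines "a \<equiv> optimal_fraction \<gamma> v"
  shows "a powr (\<gamma> - 1) - v * (1 - a) powr (\<gamma> - 1) = 0"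
proof -
  define w where "w = v powr (1 / (\<gamma> - 1))"
  have w: "w > 0" "w powr (\<gamma> - 1) = v" using assms by (simp_all add: w_def powr_powr)
  have a: "a = w * (1 - a)" "1 - a \<ge> 0"
    using w one_minus_optimal_fraction[of \<gamma> v] assms
    by (simp_all add: a_def optimal_fraction_def w_def[symmetric])
  have "a powr (\<gamma> - 1) = (w * (1 - a)) powr (\<gamma> - 1)" using a(1) by simp
  also have "\<dots> = v * (1 - a) powr (\<gamma> - 1)" using w a(2) by (simp add: powr_mult)
  finally show ?thesis by simp
qed

lemma continuous_on_trade_cost:
  assumes "\<gamma> > 0"
  shows "continuous_on {0..1} (trade_cost \<gamma> v)"
proof -
  have "continuous_on {0..1} (\<lambda>x::real. x powr \<gamma>)"
    by (rule continuous_on_powr') (use assms in \<open>auto intro: continuous_intros\<close>)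
  moreover have "continuous_on {0..1} (\<lambda>x::real. (1 - x) powr \<gamma>)"
    by (rule continuous_on_powr') (use assms in \<open>auto intro: continuous_intros\<close>)
  ultimately show ?thesis
    unfolding trade_cost_def[abs_def] by (intro continuous_on_add continuous_on_mult continuous_on_const)
qed

lemma trade_cost_optimal_fraction_less:
  assumes "\<gamma> > 1" "v > 0" "b \<in> {0..1}" "b \<noteq> optimal_fraction \<gamma> v"
  shows "trade_cost \<gamma> v (optimal_fraction \<gamma> v) < trade_cost \<gamma> v b"
proof -
  define a where "a = optimal_fraction \<gamma> v"
  define slope where "slope x = x powr (\<gamma> - 1) - v * (1 - x) powr (\<gamma> - 1)" for x
  have a_bounds: "0 < a" "a < 1"
    using assms(2) by (simp_all add: a_def optimal_fraction_pos optimal_fraction_less_one)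
  have slope_a: "slope a = 0"
    using trade_cost_slope_optimal_fraction[OF assms(1,2)] by (simp add: slope_def a_def)
  have deriv: "(trade_cost \<gamma> v has_real_derivative \<gamma> * slope x) (at x)" if "0 < x" "x < 1" for x
    unfolding slope_def by (rule has_real_derivative_trade_cost[OF assms(1) that])
  have cont: "continuous_on {x..y} (trade_cost \<gamma> v)" if "0 \<le> x" "y \<le> 1" for x y
    using continuous_on_trade_cost[of \<gamma> v] assms(1) that by (auto elim: continuous_on_subset)
  consider "b < a" | "a < b" using assms(4) by (fastforce simp: a_def)
  then show ?thesis
  proof cases
    case 1
    have "trade_cost \<gamma> v a < trade_cost \<gamma> v b"
    proof (rule DERIV_neg_imp_decreasing_open[OF 1 _ cont])
      fix x assume x: "b < x" "x < a"
      have "0 < x" "x < 1" using x a_bounds assms(3) by auto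
      moreover have "slope x < slope a"
        unfolding slope_def using x a_bounds assms by (intro trade_cost_slope_strict_mono) auto
      ultimately show "\<exists>y. (trade_cost \<gamma> v has_real_derivative y) (at x) \<and> y < 0"
        using deriv[of x] assms(1) slope_a by (auto intro!: mult_pos_neg)
    qed (use a_bounds assms in auto)
    then show ?thesis by (simp add: a_def)
  next
    case 2
    have "trade_cost \<gamma> v a < trade_cost \<gamma> v b"
    proof (rule DERIV_pos_imp_increasing_open[OF 2 _ cont])
      fix x assume x: "a < x" "x < b"
      have "0 < x" "x < 1" using x a_bounds assms(3) by auto
      moreover have "slope a < slope x"
        unfolding slope_def using x a_bounds assms by (intro trade_cost_slope_strict_mono) auto
      ultimately show "\<exists>y. (trade_cost \<gamma> v has_real_derivative y) (at x) \<and> y > 0"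
        using deriv[of x] assms(1) slope_a by auto
    qed (use a_bounds assms in auto)
    then show ?thesis by (simp add: a_def)
  qed
qed

lemma trade_cost_optimal_fraction:
  assumes "\<gamma> > 1" "v > 0"
  defines "a \<equiv> optimal_fraction \<gamma> v"
  shows "trade_cost \<gamma> v a = v * (1 - a) powr (\<gamma> - 1)"
proof -
  have a: "0 \<le> a" "0 \<le> 1 - a"
    using assms(2) optimal_fraction_pos[of v \<gamma>] optimal_fraction_less_one[of \<gamma> v]
    by (simp_all add: a_def)
  have "trade_cost \<gamma> v a = a * a powr (\<gamma> - 1) + (1 - a) * (1 - a) powr (\<gamma> - 1) * v"
    unfolding trade_cost_def using a by (simp add: powr_mult_base)
  also have "a powr (\<gamma> - 1) = v * (1 - a) powr (\<gamma> - 1)"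
    using trade_cost_slope_optimal_fraction[OF assms(1,2)] by (simp add: a_def)
  finally show ?thesis by (simp add: algebra_simps)
qed

lemma min_cost_eq:
  assumes "\<gamma> > 1" "v > 0"
  shows "min_cost \<gamma> v = v * (1 - optimal_fraction \<gamma> v) powr (\<gamma> - 1)"
proof (rule antisym)
  have "optimal_fraction \<gamma> v \<in> {0..1}"
    using assms(2) optimal_fraction_pos[of v \<gamma>] optimal_fraction_less_one[of \<gamma> v] by simp
  then have "min_cost \<gamma> v \<le> trade_cost \<gamma> v (optimal_fraction \<gamma> v)"
    using assms(1) by (intro min_cost_le_trade_cost) auto
  then show "min_cost \<gamma> v \<le> v * (1 - optimal_fraction \<gamma> v) powr (\<gamma> - 1)"
    using trade_cost_optimal_fraction[OF assms] by simp
next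
  show "v * (1 - optimal_fraction \<gamma> v) powr (\<gamma> - 1) \<le> min_cost \<gamma> v"
    using trade_cost_optimal_fraction_less[OF assms] trade_cost_optimal_fraction[OF assms]
    by (intro min_cost_greatest) (metis order.refl less_imp_le)
qed

lemma minimizer_eq_optimal_fraction:
  assumes "\<gamma> > 1" "v > 0" "a \<in> {0..1}" "\<forall>b\<in>{0..1}. trade_cost \<gamma> v a \<le> trade_cost \<gamma> v b"
  shows "a = optimal_fraction \<gamma> v"
proof (rule ccontr)
  assume "a \<noteq> optimal_fraction \<gamma> v"
  then have "trade_cost \<gamma> v (optimal_fraction \<gamma> v) < trade_cost \<gamma> v a"
    using trade_cost_optimal_fraction_less[OF assms(1-3)] by simp
  moreover have "optimal_fraction \<gamma> v \<in> {0..1}"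
    using assms(2) optimal_fraction_pos[of v \<gamma>] optimal_fraction_less_one[of \<gamma> v] by simp
  ultimately show False using assms(4) by fastforce
qed

lemma has_real_derivative_optimal_fraction:
  fixes \<gamma> v :: real
  assumes "v > 0"
  defines "a \<equiv> optimal_fraction \<gamma> v"
  shows "(optimal_fraction \<gamma> has_real_derivative 1 / (\<gamma> - 1) * a * (1 - a) / v) (at v)"
proof -
  define p where "p = 1 / (\<gamma> - 1)"
  define w where "w = v powr p"
  have w: "w > 0" "v powr (p - 1) = w / v" using assms(1) by (simp_all add: w_def powr_diff)
  then have "1 + w \<noteq> 0" by simp
  have "(optimal_fraction \<gamma> has_real_derivative
      (p * v powr (p - 1) * (1 + w) - w * (p * v powr (p - 1))) / (1 + w)\<^sup>2) (at v)"
    unfolding optimal_fraction_def[abs_def] p_def[symmetric] using assms(1) \<open>1 + w \<noteq> 0\<close>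
    by (auto intro!: derivative_eq_intros simp: power2_eq_square w_def)
  moreover have "(p * v powr (p - 1) * (1 + w) - w * (p * v powr (p - 1))) / (1 + w)\<^sup>2
      = p * a * (1 - a) / v"
    unfolding w(2) using w(1) assms(1) one_minus_optimal_fraction[of \<gamma> v]
    by (simp add: a_def optimal_fraction_def p_def[symmetric] w_def[symmetric] field_simps power2_eq_square)
  ultimately show ?thesis by (simp add: p_def)
qed

definition fraction_rate :: "real \<Rightarrow> real \<Rightarrow> real" where
  "fraction_rate \<gamma> x = x * (1 - x) * ((1 - x) powr (\<gamma> - 1) - 1)"

lemma has_real_derivative_fraction_rate:
  assumes "0 < x" "x < 1"
  shows "(fraction_rate \<gamma> has_real_derivative
           (1 - x) powr (\<gamma> - 1) * (1 - x - \<gamma> * x) - (1 - 2 * x)) (at x)"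
proof -
  have eq: "fraction_rate \<gamma> y = y * (1 - y) powr \<gamma> - y * (1 - y)" if "y < 1" for y
  proof -
    have "fraction_rate \<gamma> y = y * ((1 - y) * (1 - y) powr (\<gamma> - 1)) - y * (1 - y)"
      by (simp add: fraction_rate_def algebra_simps)
    also have "(1 - y) * (1 - y) powr (\<gamma> - 1) = (1 - y) powr \<gamma>"
      using powr_mult_base[of "1 - y" "\<gamma> - 1"] that by simp
    finally show ?thesis .
  qed
  have pow: "(1 - x) powr \<gamma> = (1 - x) * (1 - x) powr (\<gamma> - 1)"
    using powr_mult_base[of "1 - x" "\<gamma> - 1"] assms by simp
  have "((\<lambda>y. y * (1 - y) powr \<gamma> - y * (1 - y)) has_real_derivative
           (1 - x) powr (\<gamma> - 1) * (1 - x - \<gamma> * x) - (1 - 2 * x)) (at x)"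
    using assms by (auto intro!: derivative_eq_intros simp: pow algebra_simps)
  then show ?thesis
    by (rule has_field_derivative_transform_within_open[where S = "{..<1}"]) (use assms eq in auto)
qed

lemma fraction_rate_antimono:
  assumes "\<gamma> > 1" "0 < x" "x \<le> y" "y \<le> 1 / 2"
  shows "fraction_rate \<gamma> y \<le> fraction_rate \<gamma> x"
proof (rule DERIV_nonpos_imp_nonincreasing[OF assms(3)])
  fix t assume t: "x \<le> t" "t \<le> y"
  define q where "q = (1 - t) powr (\<gamma> - 1)"
  have q: "0 \<le> q" "q \<le> 1" using t assms by (auto simp: q_def intro: powr_le1)
  have "q * (1 - t - \<gamma> * t) \<le> max 0 (1 - t - \<gamma> * t)"
    using q by (cases "1 - t - \<gamma> * t \<ge> 0") (auto simp: mult_left_le_one_le mult_nonneg_nonpos)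
  moreover have "max 0 (1 - t - \<gamma> * t) \<le> 1 - 2 * t"
    using assms t mult_right_mono[of 1 \<gamma> t] by (simp add: max_def)
  ultimately have "q * (1 - t - \<gamma> * t) - (1 - 2 * t) \<le> 0"
    by linarith
  then show "\<exists>d. (fraction_rate \<gamma> has_real_derivative d) (at t) \<and> d \<le> 0"
    using has_real_derivative_fraction_rate[of t \<gamma>] t assms by (auto simp: q_def)
qed

lemma fraction_rate_neg:
  assumes "\<gamma> > 1" "0 < x" "x < 1"
  shows "fraction_rate \<gamma> x < 0"
proof -
  have "(1 - x) powr (\<gamma> - 1) < 1" using assms by (simp add: powr01_less_one)
  then show ?thesis using assms unfolding fraction_rate_def by (simp add: mult_pos_neg)
qed

lemma convex_on_cong:
  assumes "\<And>x. x \<in> A \<Longrightarrow> f x = g x"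
  shows "convex_on A f \<longleftrightarrow> convex_on A g"
  using assms by (auto simp: convex_on_def convex_def)

lemma convex_on_atLeast_closure:
  fixes f :: "real \<Rightarrow> real"
  assumes "convex_on {a<..} f" "continuous_on {a..} f"
  shows "convex_on {a..} f"
proof (rule convex_on_linorderI)
  fix t x y :: real
  assume t: "0 < t" "t < 1" and xy: "x \<in> {a..}" "y \<in> {a..}" "x < y"
  define g where "g z = (1 - t) * f z + t * f y - f ((1 - t) * z + t * y)" for z
  have "a < y" using xy by simp
  have "continuous_on {a..y} (\<lambda>z. (1 - t) * z + t * y)" by (intro continuous_intros)
  moreover have "(\<lambda>z. (1 - t) * z + t * y) ` {a..y} \<subseteq> {a..}"
  proof clarsimp
    fix z assume "a \<le> z" "z \<le> y"
    then have "(1 - t) * a + t * a \<le> (1 - t) * z + t * y"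
      using t \<open>a < y\<close> by (intro add_mono mult_left_mono) auto
    then show "a \<le> (1 - t) * z + t * y" by (simp add: algebra_simps)
  qed
  ultimately have "continuous_on {a..y} (\<lambda>z. f ((1 - t) * z + t * y))"
    by (rule continuous_on_compose2[OF assms(2)])
  then have g_cont: "continuous_on (closure {a<..<y}) g"
    unfolding g_def using \<open>a < y\<close> assms(2)
    by (auto intro!: continuous_intros elim: continuous_on_subset)
  have g_nonneg: "0 \<le> g z" if "z \<in> {a<..<y}" for z
    using convex_onD[OF assms(1), of t z y] that t by (simp add: g_def)
  have "x \<in> closure {a<..<y}" using xy \<open>a < y\<close> by simp
  then have "0 \<le> g x" by (rule continuous_ge_on_closure[OF g_cont _ g_nonneg])
  then show "f ((1 - t) *\<^sub>R x + t *\<^sub>R y) \<le> (1 - t) * f x + t * f y"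
    by (simp add: g_def)
qed (rule convex_real_interval)

lemma exponential_renewal_integral:
  fixes g :: "real \<Rightarrow> real"
  assumes lam: "lam > 0" and T: "T \<ge> 0"
    and g_meas: "g \<in> borel_measurable (restrict_space lborel {0..})"
    and g_bound: "\<And>x. x \<ge> 0 \<Longrightarrow> \<bar>g x\<bar> \<le> B"
  defines "K \<equiv> \<lambda>r. lam * exp (lam * r) * (1 - g r)"
  shows "K integrable_on {0..T}"
    and "(\<integral>s. (if s > T then 1 else g (T - s)) \<partial>density lborel (exponential_density lam))
           = 1 - exp (- lam * T) * integral {0..T} K"
proof -
  define D where "D = density lborel (exponential_density lam)"
  define f where "f s = (if s > T then 1 else g (T - s))" for s
  define g0 where "g0 r = indicator {0..} r * g r" for r :: real
  have g0_meas[measurable]: "g0 \<in> borel_measurable lborel"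
    using g_meas unfolding g0_def by (subst (asm) borel_measurable_restrict_space_iff) auto
  have "f = (\<lambda>s. if s > T then 1 else g0 (T - s))"
    by (auto simp: f_def g0_def)
  then have f_meas[measurable]: "f \<in> borel_measurable lborel" by simp
  have D: "prob_space D" unfolding D_def by (rule prob_space_exponential_density[OF lam])
  have "norm (f s) \<le> 1 + \<bar>B\<bar>" for s
    using g_bound[of "T - s"] by (auto simp: f_def)
  then have f_int: "integrable D f"
    by (intro finite_measure.integrable_const_bound[where B = "1 + \<bar>B\<bar>"] prob_space.axioms(1)[OF D])
       (auto simp: D_def)
  have K_bound: "norm (K r) \<le> lam * exp (lam * T) * (1 + \<bar>B\<bar>)" if "r \<in> {0..T}" for r
  proof -
    have "norm (K r) = lam * exp (lam * r) * \<bar>1 - g r\<bar>"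
      using lam by (simp add: K_def abs_mult)
    also have "\<dots> \<le> lam * exp (lam * T) * (1 + \<bar>B\<bar>)"
      using g_bound[of r] that lam by (intro mult_mono) auto
    finally show ?thesis .
  qed
  have K_set_int: "set_integrable lborel {0..T} K"
    unfolding set_integrable_def
  proof (rule integrableI_bounded_set[where A = "{0..T}" and B = "lam * exp (lam * T) * (1 + \<bar>B\<bar>)"])
    have "(\<lambda>r. indicator {0..T} r *\<^sub>R K r) = (\<lambda>r. indicator {0..T} r * (lam * exp (lam * r) * (1 - g0 r)))"
      by (auto simp: indicator_def K_def g0_def)
    then show "(\<lambda>r. indicator {0..T} r *\<^sub>R K r) \<in> borel_measurable lborel" by simp
  qed (use K_bound T in \<open>auto simp: emeasure_lborel_Icc indicator_def\<close>)
  then show "K integrable_on {0..T}"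
    by (rule set_borel_integral_eq_integral(1))
  have "integrable D (\<lambda>_. 1::real)"
    by (intro finite_measure.integrable_const prob_space.axioms(1)[OF D])
  then have "(\<integral>s. f s \<partial>D) = 1 - (\<integral>s. 1 - f s \<partial>D)"
    using f_int prob_space.prob_space[OF D] by (simp add: Bochner_Integration.integral_diff)
  also have "(\<integral>s. 1 - f s \<partial>D) = (\<integral>s. exponential_density lam s * (1 - f s) \<partial>lborel)"
    unfolding D_def using lam by (subst integral_density) auto
  also have "\<dots> = (\<integral>s. indicator {0..T} s * (lam * exp (- s * lam) * (1 - g (T - s))) \<partial>lborel)"
    by (auto intro!: Bochner_Integration.integral_cong simp: exponential_density_def f_def indicator_def)
  also have "\<dots> = (\<integral>r. exp (- lam * T) * (indicator {0..T} r * K r) \<partial>lborel)"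
    by (subst lborel_integral_real_affine[where c = "-1" and t = T])
       (auto intro!: Bochner_Integration.integral_cong simp: indicator_def K_def mult_exp_exp algebra_simps)
  also have "\<dots> = exp (- lam * T) * integral {0..T} K"
    using set_borel_integral_eq_integral(2)[OF K_set_int] by (simp add: set_lebesgue_integral_def)
  finally show "(\<integral>s. (if s > T then 1 else g (T - s)) \<partial>density lborel (exponential_density lam))
      = 1 - exp (- lam * T) * integral {0..T} K"
    by (simp add: D_def f_def)
qed

definition value_kernel :: "real \<Rightarrow> real \<Rightarrow> (real \<Rightarrow> real) \<Rightarrow> real \<Rightarrow> real" where
  "value_kernel lam \<gamma> u r = lam * exp (lam * r) * (1 - min_cost \<gamma> (u r))"

context
  fixes lam \<gamma> :: real and u :: "real \<Rightarrow> real"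
  assumes gamma: "\<gamma> > 1" and lam: "lam > 0"
    and value_eq: "solves_value_eq lam \<gamma> u"
    and u_meas: "u \<in> borel_measurable (restrict_space lborel {0..})"
    and u_bounded: "bounded (u ` {0..})"
begin

lemma value_eq_integral:
  assumes T: "T \<ge> 0"
  shows "value_kernel lam \<gamma> u integrable_on {0..T}"
    and "u T = 1 - exp (- lam * T) * integral {0..T} (value_kernel lam \<gamma> u)"
proof -
  obtain B where B: "\<And>x. x \<ge> 0 \<Longrightarrow> \<bar>u x\<bar> \<le> B"
    using u_bounded unfolding bounded_iff by auto
  have "min_cost \<gamma> \<in> borel_measurable borel"
    using gamma by (intro borel_measurable_continuous_onI continuous_on_min_cost) simp
  then have meas: "(\<lambda>x. min_cost \<gamma> (u x)) \<in> borel_measurable (restrict_space lborel {0..})"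
    using u_meas by measurable
  have bound: "\<bar>min_cost \<gamma> (u x)\<bar> \<le> 1 + \<bar>B\<bar>" if "x \<ge> 0" for x
    using min_cost_le_one[of \<gamma> "u x"] min_cost_ge_min[of \<gamma> "u x"] B[OF that] gamma by auto
  note renewal = exponential_renewal_integral[OF lam T meas bound]
  show "value_kernel lam \<gamma> u integrable_on {0..T}"
    using renewal(1) by (simp add: value_kernel_def[abs_def])
  show "u T = 1 - exp (- lam * T) * integral {0..T} (value_kernel lam \<gamma> u)"
    using renewal(2) value_eq T by (simp add: value_kernel_def[abs_def] solves_value_eq_def)
qed

lemma value_at_zero: "u 0 = 1"
  using value_eq_integral(2)[of 0] by simp

lemma value_le_one: "T \<ge> 0 \<Longrightarrow> u T \<le> 1"
proof -
  assume T: "T \<ge> 0"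
  have "0 \<le> integral {0..T} (value_kernel lam \<gamma> u)"
    using value_eq_integral(1)[OF T] min_cost_le_one[of \<gamma>] gamma lam
    by (intro integral_nonneg) (auto simp: value_kernel_def)
  then show ?thesis using value_eq_integral(2)[OF T] by simp
qed

lemma continuous_on_value: "b \<ge> 0 \<Longrightarrow> continuous_on {0..b} u"
proof -
  assume b: "b \<ge> 0"
  have "continuous_on {0..b} (\<lambda>T. 1 - exp (- lam * T) * integral {0..T} (value_kernel lam \<gamma> u))"
    by (intro continuous_intros indefinite_integral_continuous_1 value_eq_integral(1) b)
  then show ?thesis
    by (rule continuous_on_cong[THEN iffD1, rotated 2]) (auto simp: value_eq_integral(2))
qed

lemma continuous_on_value_kernel: "b \<ge> 0 \<Longrightarrow> continuous_on {0..b} (value_kernel lam \<gamma> u)"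
  unfolding value_kernel_def[abs_def] using gamma
  by (intro continuous_intros continuous_on_compose2[OF continuous_on_min_cost continuous_on_value]) auto

lemma value_has_derivative:
  assumes T: "T \<ge> 0"
  shows "(u has_real_derivative lam * (min_cost \<gamma> (u T) - u T)) (at T within {0..})"
proof -
  define b where "b = T + 1"
  define H where "H x = integral {0..x} (value_kernel lam \<gamma> u)" for x
  have H: "(H has_real_derivative value_kernel lam \<gamma> u T) (at T within {0..b})"
    unfolding has_real_derivative_iff_has_vector_derivative H_def
    by (rule integral_has_vector_derivative[OF continuous_on_value_kernel]) (use T in \<open>auto simp: b_def\<close>)
  have "((\<lambda>x. 1 - exp (- lam * x) * H x) has_real_derivative
      exp (- lam * T) * lam * H T - exp (- lam * T) * value_kernel lam \<gamma> u T) (at T within {0..b})"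
    by (auto intro!: derivative_eq_intros H simp: algebra_simps)
  moreover have "exp (- lam * T) * lam * H T - exp (- lam * T) * value_kernel lam \<gamma> u T
      = lam * (min_cost \<gamma> (u T) - u T)"
  proof -
    have H_T: "exp (- lam * T) * H T = 1 - u T"
      using value_eq_integral(2)[OF T] by (simp add: H_def)
    have kernel_T: "exp (- lam * T) * value_kernel lam \<gamma> u T = lam * (1 - min_cost \<gamma> (u T))"
      by (simp add: value_kernel_def mult_exp_exp)
    have "exp (- lam * T) * lam * H T - exp (- lam * T) * value_kernel lam \<gamma> u T
        = lam * (exp (- lam * T) * H T) - exp (- lam * T) * value_kernel lam \<gamma> u T"
      by (simp add: algebra_simps)
    also have "\<dots> = lam * (min_cost \<gamma> (u T) - u T)"
      unfolding H_T kernel_T by (simp add: algebra_simps)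
    finally show ?thesis .
  qed
  ultimately have deriv: "((\<lambda>x. 1 - exp (- lam * x) * H x) has_real_derivative
      lam * (min_cost \<gamma> (u T) - u T)) (at T within {0..b})"
    by simp
  have "(u has_real_derivative lam * (min_cost \<gamma> (u T) - u T)) (at T within {0..b})"
    by (rule has_field_derivative_transform_within[OF deriv zero_less_one])
       (use T in \<open>auto simp: value_eq_integral(2) H_def b_def\<close>)
  moreover have "at T within {0..} = at T within {0..b}"
    by (rule at_within_nhd[of T "{..<b}"]) (auto simp: b_def)
  ultimately show ?thesis by simp
qed

lemma value_has_derivative_at:
  assumes "T > 0"
  shows "(u has_real_derivative lam * (min_cost \<gamma> (u T) - u T)) (at T)"
proof -
  have "(u has_real_derivative lam * (min_cost \<gamma> (u T) - u T)) (at T within {0<..})"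
    by (rule has_field_derivative_subset[OF value_has_derivative]) (use assms in auto)
  then show ?thesis using assms by (simp add: at_within_open[of T "{0<..}"])
qed

lemma value_pos:
  assumes T1: "T1 \<ge> 0"
  shows "u T1 > 0"
proof (rule ccontr)
  assume "\<not> u T1 > 0"
  define S where "S = {0..T1} \<inter> u -` {..0}"
  have "closed S" unfolding S_def
    by (rule continuous_closed_preimage[OF continuous_on_value[OF T1]]) auto
  moreover have "S \<noteq> {}" using T1 \<open>\<not> u T1 > 0\<close> by (auto simp: S_def)
  moreover have S_bdd: "bdd_below S" unfolding S_def by (rule bdd_belowI[of _ 0]) auto
  ultimately have "Inf S \<in> S" by (intro closed_contains_Inf)
  define T0 where "T0 = Inf S"
  have T0: "0 \<le> T0" "u T0 \<le> 0" using \<open>Inf S \<in> S\<close> by (auto simp: S_def T0_def)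
  have before_T0: "u t > 0" if "0 \<le> t" "t < T0" for t
  proof (rule ccontr)
    assume "\<not> u t > 0"
    with that T0 \<open>Inf S \<in> S\<close> have "t \<in> S" by (auto simp: S_def T0_def)
    then have "T0 \<le> t" unfolding T0_def by (rule cInf_lower[OF _ S_bdd])
    with that show False by simp
  qed
  define G where "G t = u t * exp (lam * t)" for t
  \<comment> \<open>\<open>G\<close> is nondecreasing while \<open>u > 0\<close>, since \<open>G' = lam * exp (lam * t) * min_cost \<gamma> (u t)\<close>.\<close>
  have "G 0 \<le> G T0"
  proof (rule DERIV_nonneg_imp_increasing_open[OF T0(1)])
    fix t assume t: "0 < t" "t < T0"
    have "((\<lambda>x. u x * exp (lam * x)) has_real_derivative
        lam * (min_cost \<gamma> (u t) - u t) * exp (lam * t) + u t * (exp (lam * t) * lam)) (at t)"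
      using t by (auto intro!: derivative_eq_intros value_has_derivative_at)
    moreover have "0 \<le> min_cost \<gamma> (u t)"
      using min_cost_ge_min[of \<gamma> "u t"] gamma before_T0[of t] t by simp
    then have "0 \<le> lam * (min_cost \<gamma> (u t) - u t) * exp (lam * t) + u t * (exp (lam * t) * lam)"
      using lam by (simp add: algebra_simps)
    ultimately show "\<exists>y. (G has_real_derivative y) (at t) \<and> 0 \<le> y"
      unfolding G_def by blast
  next
    show "continuous_on {0..T0} G" unfolding G_def
      by (intro continuous_intros continuous_on_value T0(1))
  qed
  moreover have "G T0 \<le> 0" using T0(2) by (simp add: G_def mult_nonpos_nonneg)
  ultimately show False using value_at_zero by (simp add: G_def)
qed

lemma value_ode:
  assumes "T \<ge> 0"
  shows "(u has_real_derivative lam * u T * ((1 - optimal_fraction \<gamma> (u T)) powr (\<gamma> - 1) - 1))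
           (at T within {0..})"
  using value_has_derivative[OF assms] min_cost_eq[OF gamma value_pos[OF assms]]
  by (simp add: algebra_simps)

lemma optimal_fraction_value_bounds:
  assumes "T \<ge> 0"
  shows "0 < optimal_fraction \<gamma> (u T)" "optimal_fraction \<gamma> (u T) \<le> 1 / 2"
  using optimal_fraction_pos optimal_fraction_le_half[OF gamma] value_pos[OF assms] value_le_one[OF assms]
  by auto

lemma optimal_fraction_value_rate_neg:
  assumes "T \<ge> 0"
  shows "lam / (\<gamma> - 1) * fraction_rate \<gamma> (optimal_fraction \<gamma> (u T)) < 0"
proof -
  have "fraction_rate \<gamma> (optimal_fraction \<gamma> (u T)) < 0"
    using fraction_rate_neg[OF gamma] optimal_fraction_value_bounds[OF assms] by simp
  moreover have "lam / (\<gamma> - 1) > 0" using gamma lam by simp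
  ultimately show ?thesis by (rule mult_pos_neg[rotated])
qed

lemma optimal_fraction_value_has_derivative:
  assumes T: "T \<ge> 0"
  shows "((\<lambda>t. optimal_fraction \<gamma> (u t)) has_real_derivative
           lam / (\<gamma> - 1) * fraction_rate \<gamma> (optimal_fraction \<gamma> (u T))) (at T within {0..})"
proof -
  define a where "a = optimal_fraction \<gamma> (u T)"
  have "((\<lambda>t. optimal_fraction \<gamma> (u t)) has_real_derivative
      (1 / (\<gamma> - 1) * a * (1 - a) / u T) * (lam * u T * ((1 - a) powr (\<gamma> - 1) - 1))) (at T within {0..})"
    unfolding a_def
    by (rule DERIV_chain2[OF has_real_derivative_optimal_fraction[OF value_pos[OF T]] value_ode[OF T]])
  moreover have "(1 / (\<gamma> - 1) * a * (1 - a) / u T) * (lam * u T * ((1 - a) powr (\<gamma> - 1) - 1))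
      = lam / (\<gamma> - 1) * fraction_rate \<gamma> a"
    using value_pos[OF T] by (simp add: fraction_rate_def)
  ultimately show ?thesis by (simp add: a_def)
qed

lemma convex_on_optimal_fraction_value: "convex_on {0..} (\<lambda>t. optimal_fraction \<gamma> (u t))"
proof (rule convex_on_atLeast_closure)
  define a where "a t = optimal_fraction \<gamma> (u t)" for t
  define a' where "a' t = lam / (\<gamma> - 1) * fraction_rate \<gamma> (a t)" for t
  have deriv: "(a has_real_derivative a' t) (at t)" if "t > 0" for t
  proof -
    have "(a has_real_derivative a' t) (at t within {0<..})"
      using optimal_fraction_value_has_derivative[of t] that
      by (auto simp: a_def[abs_def] a'_def intro: has_field_derivative_subset)
    then show ?thesis using that by (simp add: at_within_open[of t "{0<..}"])
  qed
  have a_antimono: "a y \<le> a x" if "0 < x" "x \<le> y" for x y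
  proof (rule DERIV_nonpos_imp_nonincreasing[OF that(2)])
    fix t assume "x \<le> t" "t \<le> y"
    then have "t > 0" using that by simp
    have "a' t < 0"
      using optimal_fraction_value_rate_neg[of t] \<open>t > 0\<close> by (simp add: a'_def a_def)
    then show "\<exists>y. (a has_real_derivative y) (at t) \<and> y \<le> 0"
      using deriv[OF \<open>t > 0\<close>] by auto
  qed
  have "a' x \<le> a' y" if "x \<in> {0<..}" "y \<in> {0<..}" "x \<le> y" for x y
  proof -
    have "fraction_rate \<gamma> (a x) \<le> fraction_rate \<gamma> (a y)"
      using fraction_rate_antimono[OF gamma, of "a y" "a x"] a_antimono[of x y]
        optimal_fraction_value_bounds[of x] optimal_fraction_value_bounds[of y] that
      by (simp add: a_def)
    moreover have "lam / (\<gamma> - 1) \<ge> 0" using gamma lam by simp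
    ultimately show ?thesis unfolding a'_def by (rule mult_left_mono)
  qed
  then show "convex_on {0<..} (\<lambda>t. optimal_fraction \<gamma> (u t))"
    unfolding a_def[symmetric] by (intro convex_on_realI[where f' = a']) (auto intro: deriv)
  show "continuous_on {0..} (\<lambda>t. optimal_fraction \<gamma> (u t))"
    using optimal_fraction_value_has_derivative by (intro DERIV_continuous_on) auto
qed

end

theorem corollary3p8:
  fixes lam \<gamma> :: real and u a :: "real \<Rightarrow> real"
  assumes "\<gamma> > 1" and "lam > 0"
    and "solves_value_eq lam \<gamma> u"
    and "u \<in> borel_measurable (restrict_space lborel {0..})"
    and "bounded (u ` {0..})"
    and "\<And>T. T \<ge> 0 \<Longrightarrow> a T \<in> {0..1} \<and>
            (\<forall>b\<in>{0..1}. trade_cost \<gamma> (u T) (a T) \<le> trade_cost \<gamma> (u T) b)"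
  shows "(\<forall>T\<ge>0. (u has_real_derivative
            lam * u T * (1 / (1 + u T powr (1 / (\<gamma> - 1))) powr (\<gamma> - 1) - 1))
            (at T within {0..})) \<and> u 0 = 1
       \<and> (\<forall>T\<ge>0. (a has_real_derivative
            lam / (\<gamma> - 1) * a T * (1 - a T) * ((1 - a T) powr (\<gamma> - 1) - 1))
            (at T within {0..})
          \<and> lam / (\<gamma> - 1) * a T * (1 - a T) * ((1 - a T) powr (\<gamma> - 1) - 1) < 0)
       \<and> a 0 = 1 / 2
       \<and> convex_on {0..} a"
proof -
  note hyps = assms(1-5)
  have a_eq: "a T = optimal_fraction \<gamma> (u T)" if "T \<ge> 0" for T
    using minimizer_eq_optimal_fraction[OF assms(1) value_pos[OF hyps that]] assms(6)[OF that] by blast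
  have rate_eq: "lam / (\<gamma> - 1) * fraction_rate \<gamma> x = lam / (\<gamma> - 1) * x * (1 - x) * ((1 - x) powr (\<gamma> - 1) - 1)" for x
    by (simp add: fraction_rate_def mult.assoc)
  have "(u has_real_derivative lam * u T * (1 / (1 + u T powr (1 / (\<gamma> - 1))) powr (\<gamma> - 1) - 1))
      (at T within {0..})" if "T \<ge> 0" for T
    using value_ode[OF hyps that] by (simp add: one_minus_optimal_fraction powr_divide)
  moreover have "(a has_real_derivative lam / (\<gamma> - 1) * fraction_rate \<gamma> (a T)) (at T within {0..})"
    if "T \<ge> 0" for T
  proof -
    have "(a has_real_derivative lam / (\<gamma> - 1) * fraction_rate \<gamma> (optimal_fraction \<gamma> (u T)))
        (at T within {0..})"
      by (rule has_field_derivative_transform_within[OF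
            optimal_fraction_value_has_derivative[OF hyps that] zero_less_one])
         (use that a_eq in auto)
    then show ?thesis using a_eq[OF that] by simp
  qed
  moreover have "lam / (\<gamma> - 1) * fraction_rate \<gamma> (a T) < 0" if "T \<ge> 0" for T
    using optimal_fraction_value_rate_neg[OF hyps that] a_eq[OF that] by simp
  moreover have "convex_on {0..} a"
    using convex_on_optimal_fraction_value[OF hyps]
      convex_on_cong[of "{0..}" a "\<lambda>t. optimal_fraction \<gamma> (u t)"] a_eq by auto
  ultimately show ?thesis
    using value_at_zero[OF hyps] a_eq[of 0] unfolding rate_eq by simp
qed

end
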